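(* Assume the setting in the context with Assumptions (A1), (A2), (A3). For any $z\in\mathcal X$, $\min_{x\in X}\max_{y\in\mathcal Y}\hat f_r(x,y;z)=\max_{y\in\mathcal Y}\min_{x\in X}\hat f_r(x,y;z)$; hence $P(z)=\min_{x\in X}\Phi(x;z)=\max_{y\in\mathcal Y}\Psi_r(y;z)$.
   Context: $\mathcal X=\mathbb R^{d_1\times r}$ (Frobenius norm), $\mathcal Y=\mathbb R^{d_2}$, $\mathcal M=\{x:x^\top x=I_r\}$, $c(x)=x^\top x-I_r$, $A(x)=x(\frac32I_r-\frac12x^\top x)$; $C>\frac12+\sup_{x\in\mathcal M}\|x\|$, $X=\{x:\|x\|\le C\}$, $\bar X=\{A(x):\|x\|\le C\}$. $\partial$ is the Fréchet subdifferential. (A1) $h:\mathcal Y\to\mathbb R\cup\{+\infty\}$ proper, closed, $\zeta$-weakly convex ($h+\frac\zeta2\|\cdot\|^2$ convex), closed domain $Y$, locally Lipschitz on $Y$, $Y$ bounded. (A2) $f$ differentiable on an open set containing $\bar X\times Y$ with $\|\nabla_xf(x_1,y_1)-\nabla_xf(x_2,y_2)\|\le L_{xx}\|x_1-x_2\|+L_{xy}\|y_1-y_2\|$, $\|\nabla_yf(x_1,y_1)-\nabla_yf(x_2,y_2)\|\le L_{yx}\|x_1-x_2\|+L_{yy}\|y_1-y_2\|$ on $\bar X\times Y$. (A3) With $f_r=f-h$, there is $\mu>0$ with $\max_wf_r(x,w)-f_r(x,y)\le\frac1{2\mu}\mathrm{dist}^2(0,-\nabla_yf(x,y)+\partial h(y))$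 for all $x\in\bar X,y\in Y$. For $\rho>0$: $\tilde f(x,y)=f(A(x),y)+\frac\rho4\|c(x)\|^2$, $\tilde f_r=\tilde f-h$; $l$ is the (blockwise) Lipschitz constant of $\nabla\tilde f$ on $X\times Y$; standing choice $p>l$. For $x\in X,y\in Y,z\in\mathcal X$: $\hat f(x,y;z)=\tilde f(x,y)+\frac p2\|x-z\|^2$, $\hat f_r=\hat f-h$, $\Phi(x;z)=\max_{y\in\mathcal Y}\hat f_r(x,y;z)$, $\Psi_r(y;z)=\min_{x\in X}\hat f(x,y;z)-h(y)$, $P(z)=\min_{x\in X}\max_{y\in\mathcal Y}\hat f_r(x,y;z)$. *)

theory Defs
  imports "HOL-Analysis.Analysis" "HOL-Library.Extended_Real"
begin

text \<open>Matrices in R^(d1 x r) are rendered as real^'r^'d1 (rows indexed by 'd1);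
the Euclidean norm on this type is the Frobenius norm and the inner product is
the Frobenius inner product.\<close>

definition cmap :: "real^'r^'d \<Rightarrow> real^'r^'r" where
  "cmap x = transpose x ** x - mat 1"

definition Aret :: "real^'r^'d \<Rightarrow> real^'r^'d" where
  "Aret x = x ** ((3/2) *\<^sub>R mat 1 - (1/2) *\<^sub>R (transpose x ** x))"

definition Stiefel :: "(real^'r^'d) set" where
  "Stiefel = {x. transpose x ** x = mat 1}"

definition frechet_subdiff :: "('a::real_inner \<Rightarrow> ereal) \<Rightarrow> 'a \<Rightarrow> 'a set" where
  "frechet_subdiff h y = {v. \<bar>h y\<bar> \<noteq> \<infinity> \<and>
     0 \<le> Liminf (at y) (\<lambda>u. (h u - h y - ereal (v \<bullet> (u - y))) / ereal (norm (u - y)))}"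

end

theory Submission
  imports Defs
begin

(*
  For fixed y the map x \<mapsto> fhat(x, y) is (p - l)-strongly convex on the ball X, so its
  minimum psi(y) over X is attained. The function psi - h is continuous on the compact
  domain Y of h and attains its maximum at some y0; let x0 minimise fhat(-, y0).
  Strong convexity and the Lipschitz gradient give a quadratic minorant
  psi(u) \<ge> psi(y0) + <grad_y tilde f(x0, y0), u - y0> - c |u - y0|^2, and maximality of y0
  turns it into a quadratic minorant of h at y0, i.e. grad_y tilde f(x0, y0) is a Frechet
  subgradient of h at y0. So y0 is a stationary point of f(A(x0), -) - h, and the PL
  inequality (A3) makes it a global maximiser. Hence (x0, y0) is a saddle point of fhat_r on
  X \<times> Y, which yields the minimax equality together with attainment on both sides.
*)

lemma saddle_point_value:
  fixes F :: "'a \<Rightarrow> 'b \<Rightarrow> 'c::complete_lattice"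
  assumes "x0 \<in> K"
    and x0_min: "\<And>x. x \<in> K \<Longrightarrow> F x0 y0 \<le> F x y0"
    and y0_max: "\<And>y. F x0 y \<le> F x0 y0"
  shows "(INF x\<in>K. SUP y. F x y) = F x0 y0" and "(SUP y. INF x\<in>K. F x y) = F x0 y0"
    and "(SUP y. F x0 y) = F x0 y0" and "(INF x\<in>K. F x y0) = F x0 y0"
proof -
  show sup: "(SUP y. F x0 y) = F x0 y0"
    by (rule antisym) (auto intro: SUP_least y0_max SUP_upper)
  show inf: "(INF x\<in>K. F x y0) = F x0 y0"
    by (rule antisym) (auto intro: INF_greatest x0_min INF_lower \<open>x0 \<in> K\<close>)
  have "(INF x\<in>K. SUP y. F x y) \<le> F x0 y0"
    using INF_lower[OF \<open>x0 \<in> K\<close>, of "\<lambda>x. SUP y. F x y"] sup by simp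
  moreover have "F x0 y0 \<le> (SUP y. INF x\<in>K. F x y)"
    using SUP_upper[of y0 UNIV "\<lambda>y. INF x\<in>K. F x y"] inf by simp
  moreover have "(SUP y. INF x\<in>K. F x y) \<le> (INF x\<in>K. SUP y. F x y)"
    by (intro SUP_least INF_greatest) (auto intro: INF_lower2 SUP_upper2)
  ultimately show "(INF x\<in>K. SUP y. F x y) = F x0 y0" and "(SUP y. INF x\<in>K. F x y) = F x0 y0"
    by (auto intro: antisym order_trans)
qed

lemma INF_ereal_minus_const:
  fixes f :: "'a \<Rightarrow> real" and c :: ereal
  assumes "I \<noteq> {}" and "c \<noteq> -\<infinity>"
  shows "(INF i\<in>I. ereal (f i) - c) = (INF i\<in>I. ereal (f i)) - c"
proof -
  have neg: "- (c - x) = x - c" if "x \<noteq> \<infinity>" for x :: ereal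
    using that assms(2) by (cases c; cases x) auto
  have fin: "(INF i\<in>I. ereal (f i)) \<noteq> \<infinity>"
  proof -
    obtain i where "i \<in> I" using assms(1) by blast
    then show ?thesis using INF_lower[of i I "\<lambda>i. ereal (f i)"] by auto
  qed
  have "(INF i\<in>I. ereal (f i) - c) = (INF i\<in>I. - (c - ereal (f i)))"
    by (simp add: neg)
  also have "\<dots> = - (c - (INF i\<in>I. ereal (f i)))"
    by (simp add: ereal_INF_uminus_eq SUP_ereal_minus_right assms)
  finally show ?thesis using neg[OF fin] by simp
qed

lemma frechet_subdiff_if_quadratic_minorant:
  fixes h :: "'a::real_inner \<Rightarrow> ereal"
  assumes finite: "\<bar>h y\<bar> \<noteq> \<infinity>"
    and minorant: "\<And>u. h y + ereal (v \<bullet> (u - y) - c * (norm (u - y))\<^sup>2) \<le> h u"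
  shows "v \<in> frechet_subdiff h y"
proof -
  define q where "q u = (h u - h y - ereal (v \<bullet> (u - y))) / ereal (norm (u - y))" for u
  have q_ge: "ereal (- c * norm (u - y)) \<le> q u" if "u \<noteq> y" for u
  proof -
    obtain a where a: "h y = ereal a" using finite by auto
    have n: "norm (u - y) > 0" using that by simp
    show ?thesis
    proof (cases "h u")
      case (real w)
      have "a + (v \<bullet> (u - y) - c * (norm (u - y))\<^sup>2) \<le> w"
        using minorant[of u] a real by simp
      then have "- c * norm (u - y) * norm (u - y) \<le> w - a - v \<bullet> (u - y)"
        by (simp add: power2_eq_square)
      then have "- c * norm (u - y) \<le> (w - a - v \<bullet> (u - y)) / norm (u - y)"
        using n by (simp add: pos_le_divide_eq)
      then show ?thesis using n by (simp add: q_def a real)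
    qed (use minorant[of u] a n in \<open>auto simp: q_def\<close>)
  qed
  have "0 \<le> Liminf (at y) q"
  proof (subst le_Liminf_iff, intro allI impI)
    fix e :: ereal assume "e < 0"
    have "((\<lambda>u. ereal (- c * norm (u - y))) \<longlongrightarrow> 0) (at y)"
      by (auto intro!: tendsto_eq_intros simp: zero_ereal_def)
    then have "\<forall>\<^sub>F u in at y. e < ereal (- c * norm (u - y))"
      using \<open>e < 0\<close> by (rule order_tendstoD)
    moreover have "\<forall>\<^sub>F u in at y. u \<noteq> y"
      by (simp add: eventually_at_filter)
    ultimately show "\<forall>\<^sub>F u in at y. e < q u"
      by eventually_elim (use q_ge in \<open>blast intro: less_le_trans\<close>)
  qed
  then show ?thesis using finite by (simp add: frechet_subdiff_def q_def[abs_def])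
qed

lemma has_derivative_partial_fst:
  assumes "((\<lambda>(x, y). F x y) has_derivative (\<lambda>(dx, dy). a \<bullet> dx + b \<bullet> dy)) (at (x, y))"
  shows "((\<lambda>x. F x y) has_derivative (\<lambda>dx. a \<bullet> dx)) (at x)"
proof -
  have "((\<lambda>x. (x, y)) has_derivative (\<lambda>dx. (dx, 0))) (at x)"
    by (auto intro!: derivative_eq_intros)
  from diff_chain_at[OF this assms] show ?thesis by (simp add: o_def)
qed

lemma has_derivative_partial_snd:
  assumes "((\<lambda>(x, y). F x y) has_derivative (\<lambda>(dx, dy). a \<bullet> dx + b \<bullet> dy)) (at (x, y))"
  shows "(F x has_derivative (\<lambda>dy. b \<bullet> dy)) (at y)"
proof -
  have "((\<lambda>y. (x, y)) has_derivative (\<lambda>dy. (0, dy))) (at y)"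
    by (auto intro!: derivative_eq_intros)
  from diff_chain_at[OF this assms] show ?thesis by (simp add: o_def)
qed

lemma has_real_derivative_along_line:
  assumes "(\<phi> has_derivative (\<lambda>d. g \<bullet> d)) (at (a + t *\<^sub>R v))"
  shows "((\<lambda>s. \<phi> (a + s *\<^sub>R v)) has_real_derivative g \<bullet> v) (at t)"
proof -
  have "((\<lambda>s. a + s *\<^sub>R v) has_derivative (\<lambda>s. s *\<^sub>R v)) (at t)"
    by (rule derivative_eq_intros refl)+ simp
  from diff_chain_at[OF this assms, unfolded o_def] show ?thesis
    by (rule has_derivative_imp_has_field_derivative) simp
qed

lemma mvt_segment_gradient:
  fixes \<phi> :: "'a::real_inner \<Rightarrow> real"
  assumes "convex S" "a \<in> S" "b \<in> S"
    and deriv: "\<And>u. u \<in> S \<Longrightarrow> (\<phi> has_derivative (\<lambda>d. g u \<bullet> d)) (at u)"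
  shows "\<exists>\<xi>\<in>closed_segment a b. \<phi> b - \<phi> a = g \<xi> \<bullet> (b - a)"
proof -
  have seg: "a + s *\<^sub>R (b - a) \<in> closed_segment a b" if "0 \<le> s" "s \<le> 1" for s
  proof -
    have "a + s *\<^sub>R (b - a) = (1 - s) *\<^sub>R a + s *\<^sub>R b" by (simp add: algebra_simps)
    then show ?thesis using that unfolding in_segment by blast
  qed
  have "((\<lambda>s. \<phi> (a + s *\<^sub>R (b - a))) has_real_derivative g (a + s *\<^sub>R (b - a)) \<bullet> (b - a))
      (at s within {0..1})" if "0 \<le> s" "s \<le> 1" for s
  proof -
    have "a + s *\<^sub>R (b - a) \<in> S" using closed_segment_subset[OF assms(2,3,1)] seg[OF that] by blast
    from has_real_derivative_along_line[OF deriv[OF this]] show ?thesis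
      by (rule has_field_derivative_at_within)
  qed
  from mvt_very_simple[OF zero_le_one this[unfolded has_field_derivative_def]] obtain s
    where "s \<in> {0..1}"
      and "\<phi> (a + 1 *\<^sub>R (b - a)) - \<phi> (a + 0 *\<^sub>R (b - a)) = g (a + s *\<^sub>R (b - a)) \<bullet> (b - a) * (1 - 0)"
    by blast
  then show ?thesis using seg by auto
qed

lemma quadratic_growth_from_left_min:
  fixes \<theta> \<theta>' :: "real \<Rightarrow> real"
  assumes deriv: "\<And>t. 0 \<le> t \<Longrightarrow> t \<le> 1 \<Longrightarrow> (\<theta> has_real_derivative \<theta>' t) (at t)"
    and min_at_0: "\<And>t. 0 \<le> t \<Longrightarrow> t \<le> 1 \<Longrightarrow> \<theta> 0 \<le> \<theta> t"
    and growth: "\<And>t. 0 \<le> t \<Longrightarrow> t \<le> 1 \<Longrightarrow> \<theta>' 0 + \<kappa> * t \<le> \<theta>' t"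
  shows "\<theta> 0 + \<kappa> / 2 \<le> \<theta> 1"
proof -
  have "\<theta>' 0 \<ge> 0"
  proof (rule ccontr)
    assume "\<not> \<theta>' 0 \<ge> 0"
    then obtain e where "e > 0" and dec: "\<And>t. 0 < t \<Longrightarrow> t < e \<Longrightarrow> \<theta> t < \<theta> 0"
      using DERIV_neg_dec_right[OF deriv[of 0]] by force
    have "\<theta> (min (e/2) 1) < \<theta> 0" by (rule dec) (use \<open>e > 0\<close> in auto)
    then show False using min_at_0[of "min (e/2) 1"] \<open>e > 0\<close> by simp
  qed
  define \<omega> where "\<omega> t = \<theta> t - t * \<theta>' 0 - \<kappa> / 2 * t\<^sup>2" for t
  have "\<omega> 0 \<le> \<omega> 1"
  proof (rule DERIV_nonneg_imp_nondecreasing[OF zero_le_one])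
    fix t :: real assume t: "0 \<le> t" "t \<le> 1"
    have "(\<omega> has_real_derivative \<theta>' t - \<theta>' 0 - \<kappa> * t) (at t)"
      unfolding \<omega>_def by (auto intro!: derivative_eq_intros deriv[OF t])
    then show "\<exists>y. (\<omega> has_real_derivative y) (at t) \<and> 0 \<le> y"
      using growth[OF t] by fastforce
  qed
  then show ?thesis using \<open>\<theta>' 0 \<ge> 0\<close> by (simp add: \<omega>_def)
qed

lemma quadratic_growth_at_constrained_min:
  fixes \<phi> :: "'a::real_inner \<Rightarrow> real"
  assumes "convex K" "m \<in> K" "x \<in> K"
    and deriv: "\<And>u. u \<in> K \<Longrightarrow> (\<phi> has_derivative (\<lambda>d. g u \<bullet> d)) (at u)"
    and min_at_m: "\<And>u. u \<in> K \<Longrightarrow> \<phi> m \<le> \<phi> u"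
    and strongly_monotone: "\<And>u. u \<in> K \<Longrightarrow> \<kappa> * (norm (u - m))\<^sup>2 \<le> (g u - g m) \<bullet> (u - m)"
  shows "\<phi> m + \<kappa> / 2 * (norm (x - m))\<^sup>2 \<le> \<phi> x"
proof -
  define d where "d = x - m"
  have mem: "m + t *\<^sub>R d \<in> K" if "0 \<le> t" "t \<le> 1" for t
    using convexD_alt[OF assms(1-3) that] by (simp add: d_def algebra_simps)
  have "\<phi> (m + 0 *\<^sub>R d) + \<kappa> * (norm d)\<^sup>2 / 2 \<le> \<phi> (m + 1 *\<^sub>R d)"
  proof (rule quadratic_growth_from_left_min)
    fix t :: real assume t: "0 \<le> t" "t \<le> 1"
    show "((\<lambda>t. \<phi> (m + t *\<^sub>R d)) has_real_derivative g (m + t *\<^sub>R d) \<bullet> d) (at t)"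
      using deriv[OF mem[OF t]] by (rule has_real_derivative_along_line)
    show "\<phi> (m + 0 *\<^sub>R d) \<le> \<phi> (m + t *\<^sub>R d)" using min_at_m mem[OF t] by simp
    show "g (m + 0 *\<^sub>R d) \<bullet> d + \<kappa> * (norm d)\<^sup>2 * t \<le> g (m + t *\<^sub>R d) \<bullet> d"
    proof (cases "t = 0")
      case False
      have "t * (\<kappa> * (norm d)\<^sup>2 * t) \<le> t * ((g (m + t *\<^sub>R d) - g m) \<bullet> d)"
        using strongly_monotone[OF mem[OF t]] by (simp add: power2_eq_square algebra_simps)
      then show ?thesis using False t by (simp add: inner_diff_left)
    qed simp
  qed
  then show ?thesis by (simp add: d_def)
qed

lemma has_derivative_inner_unique:
  fixes a b :: "'a::real_inner"
  assumes "(\<phi> has_derivative (\<lambda>d. a \<bullet> d)) (at y)" and "(\<phi> has_derivative (\<lambda>d. b \<bullet> d)) (at y)"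
  shows "a = b"
  using has_derivative_unique[OF assms] by (metis vector_eq_rdot)

lemma max_if_PL_stationary:
  fixes g :: "'b \<Rightarrow> real" and h :: "'b \<Rightarrow> ereal" and a :: "'a::real_normed_vector"
  assumes PL: "(SUP w. ereal (g w) - h w) - (ereal (g y) - h y)
      \<le> ereal (\<kappa> * (infdist 0 ((\<lambda>v. - a + v) ` D))\<^sup>2)"
    and "a \<in> D" and finite: "\<bar>h y\<bar> \<noteq> \<infinity>"
  shows "ereal (g w + c) - h w \<le> ereal (g y + c) - h y"
proof -
  obtain b where b: "h y = ereal b" using finite by auto
  have "0 \<in> (\<lambda>v. - a + v) ` D" using \<open>a \<in> D\<close> by force
  then have "(SUP w. ereal (g w) - h w) - ereal (g y - b) \<le> 0"
    using PL b by (simp add: infdist_zero zero_ereal_def)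
  then have "(SUP w. ereal (g w) - h w) \<le> ereal (g y - b)"
    by (cases "SUP w. ereal (g w) - h w") auto
  then have "ereal (g w) - h w \<le> ereal (g y - b)"
    using SUP_upper[of w UNIV "\<lambda>w. ereal (g w) - h w"] by simp
  then show ?thesis using b by (cases "h w") auto
qed

lemma convex_dom_if_convex_epigraph:
  fixes h :: "'a::real_vector \<Rightarrow> ereal" and q :: "'a \<Rightarrow> real"
  assumes "convex {(y, t::real). h y + ereal (q y) \<le> ereal t}"
  shows "convex {y. h y \<noteq> \<infinity>}"
proof -
  have "{y. h y \<noteq> \<infinity>} = fst ` {(y, t::real). h y + ereal (q y) \<le> ereal t}"
  proof (intro set_eqI iffI)
    fix y assume "y \<in> {y. h y \<noteq> \<infinity>}"
    then obtain t where "h y + ereal (q y) \<le> ereal t"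
      by (cases "h y") (auto intro: exI[of _ "real_of_ereal (h y) + q y"])
    then show "y \<in> fst ` {(y, t). h y + ereal (q y) \<le> ereal t}" by force
  qed auto
  then show ?thesis using convex_linear_image[OF linear_fst assms] by simp
qed

lemma continuous_on_if_locally_lipschitz:
  assumes "\<forall>y\<in>Y. \<exists>e>0. \<exists>L. L-lipschitz_on (Y \<inter> cball y e) f"
  shows "continuous_on Y f"
  unfolding continuous_on_eq_continuous_within
proof
  fix y assume "y \<in> Y"
  then obtain e L where "e > 0" and lip: "L-lipschitz_on (Y \<inter> cball y e) f"
    using assms by blast
  from lip have "continuous_on (Y \<inter> cball y e) f" by (rule lipschitz_on_continuous_on)
  then have "continuous (at y within Y \<inter> cball y e) f"
    using \<open>y \<in> Y\<close> \<open>e > 0\<close> by (simp add: continuous_on_eq_continuous_within)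
  moreover have "at y within Y \<inter> cball y e = at y within Y"
    by (rule at_within_nhd[of y "ball y e"]) (use \<open>e > 0\<close> in auto)
  ultimately show "continuous (at y within Y) f" by simp
qed

locale proximal_minimax =
  fixes tf :: "'a::euclidean_space \<Rightarrow> 'b::euclidean_space \<Rightarrow> real"
    and gx :: "'a \<Rightarrow> 'b \<Rightarrow> 'a" and gy :: "'a \<Rightarrow> 'b \<Rightarrow> 'b"
    and K :: "'a set" and Y :: "'b set" and h :: "'b \<Rightarrow> ereal"
    and l p :: real and z :: 'a
  assumes K: "convex K" "compact K" "K \<noteq> {}"
    and Y: "convex Y" "compact Y" "Y \<noteq> {}"
    and deriv: "\<And>x y. x \<in> K \<Longrightarrow> y \<in> Y \<Longrightarrow> ((\<lambda>(x, y). tf x y) has_derivative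
           (\<lambda>(dx, dy). gx x y \<bullet> dx + gy x y \<bullet> dy)) (at (x, y))"
    and gx_lip: "\<And>x1 x2 y1 y2. x1 \<in> K \<Longrightarrow> x2 \<in> K \<Longrightarrow> y1 \<in> Y \<Longrightarrow> y2 \<in> Y \<Longrightarrow>
        norm (gx x1 y1 - gx x2 y2) \<le> l * norm (x1 - x2) + l * norm (y1 - y2)"
    and gy_lip: "\<And>x1 x2 y1 y2. x1 \<in> K \<Longrightarrow> x2 \<in> K \<Longrightarrow> y1 \<in> Y \<Longrightarrow> y2 \<in> Y \<Longrightarrow>
        norm (gy x1 y1 - gy x2 y2) \<le> l * norm (x1 - x2) + l * norm (y1 - y2)"
    and l_less_p: "l < p"
    and dom_h: "Y = {y. h y \<noteq> \<infinity>}"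
    and h_not_MInf: "\<And>y. h y \<noteq> -\<infinity>"
    and h_continuous: "continuous_on Y (\<lambda>y. real_of_ereal (h y))"
begin

definition fhat :: "'a \<Rightarrow> 'b \<Rightarrow> real" where
  "fhat x y = tf x y + p / 2 * (norm (x - z))\<^sup>2"

lemma fhat_has_derivative_x:
  assumes "x \<in> K" "y \<in> Y"
  shows "((\<lambda>x. fhat x y) has_derivative (\<lambda>d. (gx x y + p *\<^sub>R (x - z)) \<bullet> d)) (at x)"
  unfolding fhat_def power2_norm_eq_inner
  by (rule derivative_eq_intros has_derivative_partial_fst[OF deriv[OF assms]] refl)+
     (simp add: inner_add_left inner_commute algebra_simps)

lemma fhat_quadratic_growth:
  assumes "y \<in> Y" "m \<in> K" "x \<in> K" and m_min: "\<And>x. x \<in> K \<Longrightarrow> fhat m y \<le> fhat x y"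
  shows "fhat m y + (p - l) / 2 * (norm (x - m))\<^sup>2 \<le> fhat x y"
proof (rule quadratic_growth_at_constrained_min[OF K(1) \<open>m \<in> K\<close> \<open>x \<in> K\<close>])
  fix u assume "u \<in> K"
  show "((\<lambda>x. fhat x y) has_derivative (\<lambda>d. (gx u y + p *\<^sub>R (u - z)) \<bullet> d)) (at u)"
    using \<open>u \<in> K\<close> \<open>y \<in> Y\<close> by (rule fhat_has_derivative_x)
  have "- ((gx u y - gx m y) \<bullet> (u - m)) \<le> norm (gx u y - gx m y) * norm (u - m)"
    by (metis abs_le_D2 Cauchy_Schwarz_ineq2)
  also have "\<dots> \<le> l * norm (u - m) * norm (u - m)"
    using gx_lip[OF \<open>u \<in> K\<close> \<open>m \<in> K\<close> \<open>y \<in> Y\<close> \<open>y \<in> Y\<close>] by (simp add: mult_right_mono)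
  finally have "- l * (norm (u - m))\<^sup>2 \<le> (gx u y - gx m y) \<bullet> (u - m)"
    by (simp add: power2_eq_square)
  moreover have "(gx u y + p *\<^sub>R (u - z) - (gx m y + p *\<^sub>R (m - z))) \<bullet> (u - m)
      = (gx u y - gx m y) \<bullet> (u - m) + p * (norm (u - m))\<^sup>2"
    by (simp add: power2_norm_eq_inner inner_diff_left inner_add_left algebra_simps)
  ultimately show "(p - l) * (norm (u - m))\<^sup>2
      \<le> (gx u y + p *\<^sub>R (u - z) - (gx m y + p *\<^sub>R (m - z))) \<bullet> (u - m)"
    by (simp add: algebra_simps)
qed (use m_min in auto)

(* The sign of l is not assumed, hence the absolute value. *)
lemma tf_lower_bound_y:
  assumes "x \<in> K" "x' \<in> K" "w \<in> Y" "u \<in> Y"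
  shows "tf x w + gy x' w \<bullet> (u - w) - \<bar>l\<bar> * (norm (x - x') + norm (u - w)) * norm (u - w) \<le> tf x u"
proof -
  obtain \<xi> where \<xi>: "\<xi> \<in> closed_segment w u" and mvt: "tf x u - tf x w = gy x \<xi> \<bullet> (u - w)"
    using mvt_segment_gradient[OF Y(1) \<open>w \<in> Y\<close> \<open>u \<in> Y\<close>, of "tf x" "gy x"]
      has_derivative_partial_snd[OF deriv[OF \<open>x \<in> K\<close>]] by blast
  have "\<xi> \<in> Y" using closed_segment_subset[OF \<open>w \<in> Y\<close> \<open>u \<in> Y\<close> Y(1)] \<xi> by blast
  have "norm (gy x \<xi> - gy x' w) \<le> l * norm (x - x') + l * norm (\<xi> - w)"
    using gy_lip[OF \<open>x \<in> K\<close> \<open>x' \<in> K\<close> \<open>\<xi> \<in> Y\<close> \<open>w \<in> Y\<close>] .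
  also have "\<dots> \<le> \<bar>l\<bar> * norm (x - x') + \<bar>l\<bar> * norm (\<xi> - w)"
    by (intro add_mono mult_right_mono) auto
  also have "\<dots> \<le> \<bar>l\<bar> * (norm (x - x') + norm (u - w))"
    using segment_bound1[OF \<xi>] by (simp add: distrib_left mult_left_mono)
  finally have bound: "norm (gy x \<xi> - gy x' w) \<le> \<bar>l\<bar> * (norm (x - x') + norm (u - w))" .
  have "- ((gy x \<xi> - gy x' w) \<bullet> (u - w)) \<le> norm (gy x \<xi> - gy x' w) * norm (u - w)"
    by (metis abs_le_D2 Cauchy_Schwarz_ineq2)
  also have "\<dots> \<le> \<bar>l\<bar> * (norm (x - x') + norm (u - w)) * norm (u - w)"
    using bound by (simp add: mult_right_mono)
  finally have "- ((gy x \<xi> - gy x' w) \<bullet> (u - w)) \<le> \<bar>l\<bar> * (norm (x - x') + norm (u - w)) * norm (u - w)" .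
  then show ?thesis using mvt by (simp add: inner_diff_left)
qed

lemma fhat_lower_quadratic_model:
  assumes "xs \<in> K" "ys \<in> Y" and xs_min: "\<And>x. x \<in> K \<Longrightarrow> fhat xs ys \<le> fhat x ys"
    and "x \<in> K" "u \<in> Y"
  shows "fhat xs ys + gy xs ys \<bullet> (u - ys) - (\<bar>l\<bar> + l\<^sup>2 / (2 * (p - l))) * (norm (u - ys))\<^sup>2
    \<le> fhat x u"
proof -
  define D where "D = norm (x - xs)"
  define \<delta> where "\<delta> = norm (u - ys)"
  have growth: "fhat xs ys + (p - l) / 2 * D\<^sup>2 \<le> fhat x ys"
    using fhat_quadratic_growth[OF \<open>ys \<in> Y\<close> \<open>xs \<in> K\<close> \<open>x \<in> K\<close> xs_min] by (simp add: D_def)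
  have taylor: "tf x ys + gy xs ys \<bullet> (u - ys) - \<bar>l\<bar> * (D + \<delta>) * \<delta> \<le> tf x u"
    using tf_lower_bound_y[OF \<open>x \<in> K\<close> \<open>xs \<in> K\<close> \<open>ys \<in> Y\<close> \<open>u \<in> Y\<close>] by (simp add: D_def \<delta>_def)
  \<comment> \<open>completing the square in D\<close>
  have "- (l\<^sup>2 / (2 * (p - l)) * \<delta>\<^sup>2) \<le> (p - l) / 2 * D\<^sup>2 - \<bar>l\<bar> * D * \<delta>"
  proof -
    have "0 \<le> ((p - l) * D - \<bar>l\<bar> * \<delta>)\<^sup>2 / (2 * (p - l))" using l_less_p by simp
    also have "\<dots> = (p - l) / 2 * D\<^sup>2 - \<bar>l\<bar> * D * \<delta> + l\<^sup>2 / (2 * (p - l)) * \<delta>\<^sup>2"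
      using l_less_p by (simp add: field_simps power2_eq_square)
    finally show ?thesis by simp
  qed
  moreover have "(\<bar>l\<bar> + l\<^sup>2 / (2 * (p - l))) * \<delta>\<^sup>2
      = \<bar>l\<bar> * (D + \<delta>) * \<delta> - \<bar>l\<bar> * D * \<delta> + l\<^sup>2 / (2 * (p - l)) * \<delta>\<^sup>2"
    by (simp add: algebra_simps power2_eq_square)
  ultimately have "fhat xs ys + gy xs ys \<bullet> (u - ys) - (\<bar>l\<bar> + l\<^sup>2 / (2 * (p - l))) * \<delta>\<^sup>2
      \<le> fhat x ys + (gy xs ys \<bullet> (u - ys) - \<bar>l\<bar> * (D + \<delta>) * \<delta>)"
    using growth by linarith
  also have "\<dots> \<le> fhat x u" using taylor by (simp add: fhat_def)
  finally show ?thesis by (simp add: \<delta>_def)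
qed

lemma fhat_continuous_on_x:
  assumes "y \<in> Y"
  shows "continuous_on K (\<lambda>x. fhat x y)"
proof -
  have "isCont (\<lambda>x. fhat x y) x" if "x \<in> K" for x
    using has_derivative_continuous[OF fhat_has_derivative_x[OF that assms]] .
  then show ?thesis by (simp add: continuous_at_imp_continuous_on)
qed

definition xmin :: "'b \<Rightarrow> 'a" where
  "xmin y = (SOME m. m \<in> K \<and> (\<forall>x\<in>K. fhat m y \<le> fhat x y))"

lemma xmin:
  assumes "y \<in> Y"
  shows "xmin y \<in> K" and "\<And>x. x \<in> K \<Longrightarrow> fhat (xmin y) y \<le> fhat x y"
proof -
  have "\<exists>m\<in>K. \<forall>x\<in>K. fhat m y \<le> fhat x y"
    by (rule continuous_attains_inf[OF K(2,3) fhat_continuous_on_x[OF assms]])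
  then have "xmin y \<in> K \<and> (\<forall>x\<in>K. fhat (xmin y) y \<le> fhat x y)"
    using someI_ex[of "\<lambda>m. m \<in> K \<and> (\<forall>x\<in>K. fhat m y \<le> fhat x y)"] unfolding xmin_def by blast
  then show "xmin y \<in> K" and "\<And>x. x \<in> K \<Longrightarrow> fhat (xmin y) y \<le> fhat x y" by auto
qed

definition min_value :: "'b \<Rightarrow> real" where
  "min_value y = fhat (xmin y) y"

lemma gy_bounded:
  obtains M where "\<And>x y. x \<in> K \<Longrightarrow> y \<in> Y \<Longrightarrow> norm (gy x y) \<le> M"
proof -
  obtain x0 y0 where "x0 \<in> K" "y0 \<in> Y" using K(3) Y(3) by blast
  have bound: "norm (gy x y) \<le> norm (gy x0 y0) + \<bar>l\<bar> * (diameter K + diameter Y)"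
    if "x \<in> K" "y \<in> Y" for x y
  proof -
    have "norm (gy x y - gy x0 y0) \<le> l * norm (x - x0) + l * norm (y - y0)"
      using gy_lip[OF \<open>x \<in> K\<close> \<open>x0 \<in> K\<close> \<open>y \<in> Y\<close> \<open>y0 \<in> Y\<close>] .
    also have "\<dots> \<le> \<bar>l\<bar> * norm (x - x0) + \<bar>l\<bar> * norm (y - y0)"
      by (intro add_mono mult_right_mono) auto
    also have "\<dots> \<le> \<bar>l\<bar> * diameter K + \<bar>l\<bar> * diameter Y"
      using diameter_bounded_bound[OF compact_imp_bounded[OF K(2)] \<open>x \<in> K\<close> \<open>x0 \<in> K\<close>]
        diameter_bounded_bound[OF compact_imp_bounded[OF Y(2)] \<open>y \<in> Y\<close> \<open>y0 \<in> Y\<close>]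
      by (intro add_mono mult_left_mono) (auto simp: dist_norm)
    finally show ?thesis
      using norm_triangle_sub[of "gy x y" "gy x0 y0"] by (simp add: distrib_left)
  qed
  show thesis by (rule that[OF bound])
qed

lemma continuous_on_min_value: "continuous_on Y min_value"
proof -
  obtain M where M: "\<And>x y. x \<in> K \<Longrightarrow> y \<in> Y \<Longrightarrow> norm (gy x y) \<le> M"
    using gy_bounded by blast
  have tf_lip: "tf x u \<le> tf x v + M * norm (u - v)" if "x \<in> K" "u \<in> Y" "v \<in> Y" for x u v
  proof -
    obtain \<xi> where \<xi>: "\<xi> \<in> closed_segment v u" and mvt: "tf x u - tf x v = gy x \<xi> \<bullet> (u - v)"
      using mvt_segment_gradient[OF Y(1) \<open>v \<in> Y\<close> \<open>u \<in> Y\<close>, of "tf x" "gy x"]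
        has_derivative_partial_snd[OF deriv[OF \<open>x \<in> K\<close>]] by blast
    have "\<xi> \<in> Y" using closed_segment_subset[OF \<open>v \<in> Y\<close> \<open>u \<in> Y\<close> Y(1)] \<xi> by blast
    have "gy x \<xi> \<bullet> (u - v) \<le> norm (gy x \<xi>) * norm (u - v)" by (rule norm_cauchy_schwarz)
    also have "\<dots> \<le> M * norm (u - v)" using M[OF \<open>x \<in> K\<close> \<open>\<xi> \<in> Y\<close>] by (simp add: mult_right_mono)
    finally show ?thesis using mvt by simp
  qed
  have one_sided: "min_value u \<le> min_value v + M * dist u v" if "u \<in> Y" "v \<in> Y" for u v
  proof -
    have "min_value u \<le> fhat (xmin v) u" unfolding min_value_def using xmin that by blast
    also have "\<dots> \<le> min_value v + M * dist u v"
      using tf_lip[OF xmin(1) that, of v] \<open>v \<in> Y\<close> by (simp add: min_value_def fhat_def dist_norm)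
    finally show ?thesis .
  qed
  have "M \<ge> 0"
    using M[OF xmin(1)] Y(3) norm_ge_zero order_trans by blast
  have "M-lipschitz_on Y min_value"
  proof (rule lipschitz_onI)
    fix u v assume "u \<in> Y" "v \<in> Y"
    then show "dist (min_value u) (min_value v) \<le> M * dist u v"
      using one_sided[of u v] one_sided[of v u] by (simp add: dist_real_def dist_commute abs_le_iff)
  qed fact
  then show ?thesis by (rule lipschitz_on_continuous_on)
qed

lemma exists_saddle_candidate:
  obtains xs ys where "xs \<in> K" "ys \<in> Y" "\<And>x. x \<in> K \<Longrightarrow> fhat xs ys \<le> fhat x ys"
    and "gy xs ys \<in> frechet_subdiff h ys"
proof -
  define hr where "hr y = real_of_ereal (h y)" for y
  have h_eq: "h y = ereal (hr y)" if "y \<in> Y" for y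
    using that dom_h h_not_MInf[of y] unfolding hr_def by (cases "h y") auto
  obtain ys where "ys \<in> Y" and ys_max: "\<And>y. y \<in> Y \<Longrightarrow> min_value y - hr y \<le> min_value ys - hr ys"
    using continuous_attains_sup[OF Y(2,3) continuous_on_diff[OF continuous_on_min_value h_continuous]]
    unfolding hr_def by blast
  define xs where "xs = xmin ys"
  have "xs \<in> K" and xs_min: "\<And>x. x \<in> K \<Longrightarrow> fhat xs ys \<le> fhat x ys"
    using xmin[OF \<open>ys \<in> Y\<close>] by (simp_all add: xs_def)
  have "h ys + ereal (gy xs ys \<bullet> (u - ys) - (\<bar>l\<bar> + l\<^sup>2 / (2 * (p - l))) * (norm (u - ys))\<^sup>2) \<le> h u"
    for u
  proof (cases "u \<in> Y")
    case True
    have "min_value ys + gy xs ys \<bullet> (u - ys) - (\<bar>l\<bar> + l\<^sup>2 / (2 * (p - l))) * (norm (u - ys))\<^sup>2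
        \<le> min_value u"
      using fhat_lower_quadratic_model[OF \<open>xs \<in> K\<close> \<open>ys \<in> Y\<close> xs_min xmin(1)[OF True] True]
      by (simp add: min_value_def xs_def)
    with ys_max[OF True] show ?thesis by (simp add: h_eq True \<open>ys \<in> Y\<close>)
  qed (use dom_h in simp)
  then have "gy xs ys \<in> frechet_subdiff h ys"
    by (intro frechet_subdiff_if_quadratic_minorant) (simp_all add: h_eq[OF \<open>ys \<in> Y\<close>])
  with \<open>xs \<in> K\<close> \<open>ys \<in> Y\<close> xs_min show thesis by (rule that)
qed


theorem minimax_if_stationary_points_maximise:
  assumes stationary_max: "\<And>xs ys w. xs \<in> K \<Longrightarrow> ys \<in> Y \<Longrightarrow> gy xs ys \<in> frechet_subdiff h ys \<Longrightarrow>
      ereal (fhat xs w) - h w \<le> ereal (fhat xs ys) - h ys"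
  shows "let fhat_r = (\<lambda>x y. ereal (fhat x y) - h y);
             \<Phi> = (\<lambda>x. SUP y. fhat_r x y);
             \<Psi>r = (\<lambda>y. (INF x\<in>K. ereal (fhat x y)) - h y);
             P = (INF x\<in>K. \<Phi> x)
         in P = (SUP y. INF x\<in>K. fhat_r x y) \<and> P = (SUP y. \<Psi>r y)
            \<and> (\<exists>x0\<in>K. \<Phi> x0 = P) \<and> (\<exists>y0. \<Psi>r y0 = P)"
proof -
  obtain xs ys where "xs \<in> K" "ys \<in> Y" and xs_min: "\<And>x. x \<in> K \<Longrightarrow> fhat xs ys \<le> fhat x ys"
    and "gy xs ys \<in> frechet_subdiff h ys"
    using exists_saddle_candidate by blast
  have "\<bar>h ys\<bar> \<noteq> \<infinity>" using \<open>ys \<in> Y\<close> dom_h h_not_MInf[of ys] by auto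
  then have "ereal (fhat xs ys) - h ys \<le> ereal (fhat x ys) - h ys" if "x \<in> K" for x
    using xs_min[OF that] by (simp add: ereal_minus_mono)
  from saddle_point_value[of xs K "\<lambda>x y. ereal (fhat x y) - h y" ys, OF \<open>xs \<in> K\<close> this
      stationary_max[OF \<open>xs \<in> K\<close> \<open>ys \<in> Y\<close> \<open>gy xs ys \<in> frechet_subdiff h ys\<close>]]
  moreover have "(INF x\<in>K. ereal (fhat x y)) - h y = (INF x\<in>K. ereal (fhat x y) - h y)" for y
    by (subst INF_ereal_minus_const) (use K(3) h_not_MInf in auto)
  ultimately show ?thesis using \<open>xs \<in> K\<close> unfolding Let_def by auto
qed

end

lemma norm_Stiefel:
  fixes x :: "real^'r^'d"
  assumes "x \<in> Stiefel"
  shows "norm x = sqrt (real CARD('r))"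
proof -
  have "(norm x)\<^sup>2 = (\<Sum>i\<in>UNIV. \<Sum>j\<in>UNIV. x$i$j * x$i$j)"
    by (simp add: power2_norm_eq_inner inner_vec_def)
  also have "\<dots> = (\<Sum>j\<in>UNIV. (transpose x ** x)$j$j)"
    by (subst sum.swap) (simp add: matrix_matrix_mult_def transpose_def)
  also have "\<dots> = real CARD('r)"
    using assms by (simp add: Stiefel_def mat_def)
  finally show ?thesis by (simp add: real_sqrt_unique)
qed

lemma Sup_norm_Stiefel:
  assumes "(Stiefel :: (real^'r^'d) set) \<noteq> {}"
  shows "Sup (norm ` (Stiefel :: (real^'r^'d) set)) = sqrt (real CARD('r))"
proof -
  have "norm ` (Stiefel :: (real^'r^'d) set) = {sqrt (real CARD('r))}"
    using assms norm_Stiefel by fastforce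
  then show ?thesis by simp
qed

theorem lemma7:
  fixes f :: "real^'r^'d1 \<Rightarrow> real^'d2 \<Rightarrow> real"
    and fx :: "real^'r^'d1 \<Rightarrow> real^'d2 \<Rightarrow> real^'r^'d1"
    and fy :: "real^'r^'d1 \<Rightarrow> real^'d2 \<Rightarrow> real^'d2"
    and h :: "real^'d2 \<Rightarrow> ereal"
    and gx :: "real^'r^'d1 \<Rightarrow> real^'d2 \<Rightarrow> real^'r^'d1"
    and gy :: "real^'r^'d1 \<Rightarrow> real^'d2 \<Rightarrow> real^'d2"
    and U :: "((real^'r^'d1) \<times> (real^'d2)) set"
    and C \<zeta> Lxx Lxy Lyx Lyy \<mu> \<rho> l p :: real
    and Y :: "(real^'d2) set"
    and z :: "real^'r^'d1"
  assumes Stiefel_ne: "(Stiefel :: (real^'r^'d1) set) \<noteq> {}"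
    and C: "C > 1/2 + Sup (norm ` (Stiefel :: (real^'r^'d1) set))"
    \<comment> \<open>(A1)\<close>
    and Y_def: "Y = {y. h y \<noteq> \<infinity>}"
    and h_proper: "\<forall>y. h y \<noteq> -\<infinity>" "Y \<noteq> {}"
    and h_closed: "closed {(y, t::real). h y \<le> ereal t}"
    and h_weakly_convex: "convex {(y, t::real). h y + ereal (\<zeta>/2 * (norm y)^2) \<le> ereal t}"
    and Y_closed: "closed Y"
    and h_loc_lip: "\<forall>y\<in>Y. \<exists>e>0. \<exists>L. L-lipschitz_on (Y \<inter> cball y e) (\<lambda>u. real_of_ereal (h u))"
    and Y_bounded: "bounded Y"
    \<comment> \<open>(A2)\<close>
    and U_open: "open U"
    and U_sub: "(Aret ` cball 0 C) \<times> Y \<subseteq> U"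
    and f_deriv: "\<forall>(x, y)\<in>U. ((\<lambda>(x, y). f x y) has_derivative
                      (\<lambda>(dx, dy). fx x y \<bullet> dx + fy x y \<bullet> dy)) (at (x, y))"
    and fx_lip: "\<forall>x1\<in>Aret ` cball 0 C. \<forall>x2\<in>Aret ` cball 0 C. \<forall>y1\<in>Y. \<forall>y2\<in>Y.
        norm (fx x1 y1 - fx x2 y2) \<le> Lxx * norm (x1 - x2) + Lxy * norm (y1 - y2)"
    and fy_lip: "\<forall>x1\<in>Aret ` cball 0 C. \<forall>x2\<in>Aret ` cball 0 C. \<forall>y1\<in>Y. \<forall>y2\<in>Y.
        norm (fy x1 y1 - fy x2 y2) \<le> Lyx * norm (x1 - x2) + Lyy * norm (y1 - y2)"
    \<comment> \<open>(A3)\<close>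
    and mu_pos: "\<mu> > 0"
    and PL: "\<forall>x\<in>Aret ` cball 0 C. \<forall>y\<in>Y. frechet_subdiff h y \<noteq> {} \<longrightarrow>
        (SUP w. ereal (f x w) - h w) - (ereal (f x y) - h y)
          \<le> ereal (1 / (2 * \<mu>) * (infdist 0 ((\<lambda>v. - fy x y + v) ` frechet_subdiff h y))^2)"
    \<comment> \<open>penalty, gradient of tilde f and its blockwise Lipschitz constant l, p > l\<close>
    and rho_pos: "\<rho> > 0"
    and tf_deriv: "\<forall>x\<in>cball 0 C. \<forall>y\<in>Y.
        ((\<lambda>(x, y). f (Aret x) y + \<rho> / 4 * (norm (cmap x))^2) has_derivative
           (\<lambda>(dx, dy). gx x y \<bullet> dx + gy x y \<bullet> dy)) (at (x, y))"
    and gx_lip: "\<forall>x1\<in>cball 0 C. \<forall>x2\<in>cball 0 C. \<forall>y1\<in>Y. \<forall>y2\<in>Y.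
        norm (gx x1 y1 - gx x2 y2) \<le> l * norm (x1 - x2) + l * norm (y1 - y2)"
    and gy_lip: "\<forall>x1\<in>cball 0 C. \<forall>x2\<in>cball 0 C. \<forall>y1\<in>Y. \<forall>y2\<in>Y.
        norm (gy x1 y1 - gy x2 y2) \<le> l * norm (x1 - x2) + l * norm (y1 - y2)"
    and p_gt: "p > l"
  shows
    "let fhat = (\<lambda>x y. f (Aret x) y + \<rho> / 4 * (norm (cmap x))^2 + p / 2 * (norm (x - z))^2);
         fhat_r = (\<lambda>x y. ereal (fhat x y) - h y);
         \<Phi> = (\<lambda>x. SUP y. fhat_r x y);
         \<Psi>r = (\<lambda>y. (INF x\<in>cball 0 C. ereal (fhat x y)) - h y);
         P = (INF x\<in>cball 0 C. \<Phi> x)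
     in P = (SUP y. INF x\<in>cball 0 C. fhat_r x y)
        \<and> P = (SUP y. \<Psi>r y)
        \<and> (\<exists>x0\<in>cball 0 C. \<Phi> x0 = P)
        \<and> (\<exists>y0. \<Psi>r y0 = P)"
proof -
  define tf where "tf x y = f (Aret x) y + \<rho> / 4 * (norm (cmap x))\<^sup>2" for x y
  have "C > 0"
    using C Sup_norm_Stiefel[OF Stiefel_ne] real_sqrt_ge_zero[of "real CARD('r)"] by linarith
  interpret M: proximal_minimax tf gx gy "cball 0 C" Y h l p z
  proof
    show "convex (cball (0::real^'r^'d1) C)" "compact (cball (0::real^'r^'d1) C)"
      "cball (0::real^'r^'d1) C \<noteq> {}" using \<open>C > 0\<close> by auto
    show "convex Y" using convex_dom_if_convex_epigraph[OF h_weakly_convex] Y_def by simp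
    show "compact Y" using Y_closed Y_bounded by (simp add: compact_eq_bounded_closed)
    show "continuous_on Y (\<lambda>y. real_of_ereal (h y))"
      using h_loc_lip by (rule continuous_on_if_locally_lipschitz)
    show "((\<lambda>(x, y). tf x y) has_derivative (\<lambda>(dx, dy). gx x y \<bullet> dx + gy x y \<bullet> dy)) (at (x, y))"
      if "x \<in> cball 0 C" "y \<in> Y" for x y
      using tf_deriv that unfolding tf_def by blast
  qed (use gx_lip gy_lip p_gt Y_def h_proper in auto)
  have fhat_eq: "M.fhat = (\<lambda>x y. f (Aret x) y + \<rho> / 4 * (norm (cmap x))\<^sup>2 + p / 2 * (norm (x - z))\<^sup>2)"
    by (simp add: fun_eq_iff M.fhat_def tf_def)
  have "ereal (M.fhat xs w) - h w \<le> ereal (M.fhat xs ys) - h ys"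
    if xs: "xs \<in> cball 0 C" and ys: "ys \<in> Y" and stationary: "gy xs ys \<in> frechet_subdiff h ys"
    for xs ys w
  proof -
    have "(Aret xs, ys) \<in> U" using U_sub xs ys by blast
    with f_deriv have "((\<lambda>(x, y). f x y) has_derivative
        (\<lambda>(dx, dy). fx (Aret xs) ys \<bullet> dx + fy (Aret xs) ys \<bullet> dy)) (at (Aret xs, ys))" by blast
    from has_derivative_add_const[OF has_derivative_partial_snd[OF this]]
    have "gy xs ys = fy (Aret xs) ys"
      by (rule has_derivative_inner_unique[OF has_derivative_partial_snd[OF tf_deriv[rule_format, OF xs ys]]])
    with stationary have stationary': "fy (Aret xs) ys \<in> frechet_subdiff h ys" by simp
    have "\<bar>h ys\<bar> \<noteq> \<infinity>" using ys Y_def h_proper by auto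
    have PL_ys: "(SUP w. ereal (f (Aret xs) w) - h w) - (ereal (f (Aret xs) ys) - h ys)
      \<le> ereal (1 / (2 * \<mu>) * (infdist 0 ((\<lambda>v. - fy (Aret xs) ys + v) ` frechet_subdiff h ys))\<^sup>2)"
      using PL xs ys stationary by blast
    from max_if_PL_stationary[OF PL_ys stationary' \<open>\<bar>h ys\<bar> \<noteq> \<infinity>\<close>, where w = w
        and c = "\<rho> / 4 * (norm (cmap xs))\<^sup>2 + p / 2 * (norm (xs - z))\<^sup>2"]
    show ?thesis by (simp add: fhat_eq add.assoc)
  qed
  from M.minimax_if_stationary_points_maximise[OF this] show ?thesis unfolding Let_def fhat_eq .
qed

end
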